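(* Let $G$ be a directed graph with vertices $s,t$ and $k\ge1$. For any $C_1,C_2\in L^*$ and any $e\in E(C_1)\cup E(C_2)$, it holds that $\max(\mu_e(C_1\vee C_2),\mu_e(C_1\wedge C_2))\le\max(\mu_e(C_1),\mu_e(C_2))$.
   Context: An $s$-$t$ cut of a directed graph $G$ is a set $X\subseteq E(G)$ such that removing $X$ leaves no directed $s$-$t$ path; $\Gamma_G(s,t)$ is the set of $s$-$t$ cuts of minimum cardinality. Fix a maximum-size collection $\mathcal P$ of pairwise edge-disjoint directed $s$-$t$ paths (each minimum $s$-$t$ cut contains exactly one edge of each path in $\mathcal P$). For $X,Y\in\Gamma_G(s,t)$, $S_{\min}(X\cup Y)$ (resp. $S_{\max}(X\cup Y)$) consists, for each $p\in\mathcal P$, of the edge of $(X\cup Y)\cap p$ occurring first (resp. last) along $p$. $X\le Y$ means every directed $s$-$t$ path meets an edge of $X$ at or before an edge of $Y$. $U^k_{\mathrm{lr}}$ is the set of $k$-tuples $[X_1,\dots,X_k]$ of elements of $\Gamma_G(s,t)$ with $X_i\le X_j$ for all $i<j$. $L^*$ is the lattice on $U^k_{\mathrm{lr}}$ with componentwise order, join $[X_i]_i\vee[Y_i]_i=[S_{\max}(X_i\cup Y_i)]_i$ and meet $[X_i]_i\wedge[Y_i]_i=[S_{\min}(X_i\cup Y_i)]_i$. For $C=[X_1,\dots,X_k]$, $E(C)=\bigcup_i X_i$ and $\mu_e(C)$ is the number of indices $i$ with $e\in X_i$. *)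

theory Defs
  imports "Graph_Theory.Graph_Theory"
begin

text \<open>Directed s-t paths are the arc paths (no repeated vertex) of the Graph_Theory library.\<close>

definition st_cut :: "('a,'b) pre_digraph \<Rightarrow> 'a \<Rightarrow> 'a \<Rightarrow> 'b set \<Rightarrow> bool" where
  "st_cut G s t X \<longleftrightarrow> X \<subseteq> arcs G \<and> (\<forall>p. pre_digraph.apath G s p t \<longrightarrow> set p \<inter> X \<noteq> {})"

definition min_cuts :: "('a,'b) pre_digraph \<Rightarrow> 'a \<Rightarrow> 'a \<Rightarrow> 'b set set" where
  "min_cuts G s t = {X. st_cut G s t X \<and> (\<forall>Y. st_cut G s t Y \<longrightarrow> card X \<le> card Y)}"

definition edge_disjoint_paths :: "('a,'b) pre_digraph \<Rightarrow> 'a \<Rightarrow> 'a \<Rightarrow> 'b list set \<Rightarrow> bool" where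
  "edge_disjoint_paths G s t P \<longleftrightarrow>
     (\<forall>p\<in>P. pre_digraph.apath G s p t) \<and>
     (\<forall>p\<in>P. \<forall>q\<in>P. p \<noteq> q \<longrightarrow> set p \<inter> set q = {})"

definition max_path_family :: "('a,'b) pre_digraph \<Rightarrow> 'a \<Rightarrow> 'a \<Rightarrow> 'b list set \<Rightarrow> bool" where
  "max_path_family G s t P \<longleftrightarrow> edge_disjoint_paths G s t P \<and> finite P \<and>
     (\<forall>Q. edge_disjoint_paths G s t Q \<and> finite Q \<longrightarrow> card Q \<le> card P)"

definition S_min :: "'b list set \<Rightarrow> 'b set \<Rightarrow> 'b set" where
  "S_min P Z = (\<lambda>p. hd (filter (\<lambda>e. e \<in> Z) p)) ` P"

definition S_max :: "'b list set \<Rightarrow> 'b set \<Rightarrow> 'b set" where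
  "S_max P Z = (\<lambda>p. last (filter (\<lambda>e. e \<in> Z) p)) ` P"

definition cut_le :: "('a,'b) pre_digraph \<Rightarrow> 'a \<Rightarrow> 'a \<Rightarrow> 'b set \<Rightarrow> 'b set \<Rightarrow> bool" where
  "cut_le G s t X Y \<longleftrightarrow> (\<forall>p. pre_digraph.apath G s p t \<longrightarrow>
      (\<exists>i<length p. p ! i \<in> X \<and> (\<forall>j<i. p ! j \<notin> Y)))"

definition U_lr :: "('a,'b) pre_digraph \<Rightarrow> 'a \<Rightarrow> 'a \<Rightarrow> nat \<Rightarrow> 'b set list set" where
  "U_lr G s t k = {C. length C = k \<and> (\<forall>i<k. C ! i \<in> min_cuts G s t) \<and>
      (\<forall>i j. i < j \<and> j < k \<longrightarrow> cut_le G s t (C ! i) (C ! j))}"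

definition tup_join :: "'b list set \<Rightarrow> 'b set list \<Rightarrow> 'b set list \<Rightarrow> 'b set list" where
  "tup_join P C D = map2 (\<lambda>X Y. S_max P (X \<union> Y)) C D"

definition tup_meet :: "'b list set \<Rightarrow> 'b set list \<Rightarrow> 'b set list \<Rightarrow> 'b set list" where
  "tup_meet P C D = map2 (\<lambda>X Y. S_min P (X \<union> Y)) C D"

definition tup_edges :: "'b set list \<Rightarrow> 'b set" where
  "tup_edges C = \<Union> (set C)"

definition mu :: "'b \<Rightarrow> 'b set list \<Rightarrow> nat" where
  "mu e C = card {i. i < length C \<and> e \<in> C ! i}"

end

theory Submission
  imports Defs
begin

(*
  Every minimum cut X meets each path of the maximum family P in exactly one edge and is covered
  by these paths: the weak direction of Menger's theorem (via flow decomposition and the residual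
  graph of the union of P) gives |X| <= |P|, while the |P| edge-disjoint paths each need an edge of X.
  Fix the path p of P through e, at position c. Along p a tuple C in U_lr is described by the
  positions a_1 <= ... <= a_k of its cut edges, and the components of the join and meet of tuples
  with positions a and b sit at positions max a_i b_i and min a_i b_i. Hence mu_e counts the
  indices whose position equals c. If max a_i b_i = c, then all such i satisfy a_i = c or all
  satisfy b_i = c: otherwise a_i < c = b_i and b_j < c = a_j contradict monotonicity at i and j.
  The meet is symmetric.
*)

section \<open>Monotone sequences and filtered lists\<close>

lemma card_max_eq_le_max_card:
  fixes a b :: "nat \<Rightarrow> 'a::linorder"
  assumes "mono_on {..<k} a" "mono_on {..<k} b"
  shows "card {i. i < k \<and> max (a i) (b i) = c}
           \<le> max (card {i. i < k \<and> a i = c}) (card {i. i < k \<and> b i = c})"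
proof -
  have "{i. i < k \<and> max (a i) (b i) = c} \<subseteq> {i. i < k \<and> a i = c}
      \<or> {i. i < k \<and> max (a i) (b i) = c} \<subseteq> {i. i < k \<and> b i = c}"
  proof (rule ccontr)
    assume "\<not> ?thesis"
    then obtain i j where i: "i < k" "max (a i) (b i) = c" "a i \<noteq> c"
      and j: "j < k" "max (a j) (b j) = c" "b j \<noteq> c"
      by blast
    then have "a i < c" "b i = c" "b j < c" "a j = c"
      by (auto simp: max_def split: if_splits)
    then show False
      using i(1) j(1) mono_onD[OF assms(1), of j i] mono_onD[OF assms(2), of i j]
      by (cases "i \<le> j") auto
  qed
  moreover have "finite {i. i < k \<and> P i}" for P by simp
  ultimately show ?thesis by (meson card_mono le_max_iff_disj)
qed

lemma card_min_eq_le_max_card: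
  fixes a b :: "nat \<Rightarrow> 'a::linorder"
  assumes "mono_on {..<k} a" "mono_on {..<k} b"
  shows "card {i. i < k \<and> min (a i) (b i) = c}
           \<le> max (card {i. i < k \<and> a i = c}) (card {i. i < k \<and> b i = c})"
proof -
  have "{i. i < k \<and> min (a i) (b i) = c} \<subseteq> {i. i < k \<and> a i = c}
      \<or> {i. i < k \<and> min (a i) (b i) = c} \<subseteq> {i. i < k \<and> b i = c}"
  proof (rule ccontr)
    assume "\<not> ?thesis"
    then obtain i j where i: "i < k" "min (a i) (b i) = c" "a i \<noteq> c"
      and j: "j < k" "min (a j) (b j) = c" "b j \<noteq> c"
      by blast
    then have "c < a i" "b i = c" "c < b j" "a j = c"
      by (auto simp: min_def split: if_splits)
    then show False
      using i(1) j(1) mono_onD[OF assms(1), of i j] mono_onD[OF assms(2), of j i]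
      by (cases "i \<le> j") auto
  qed
  moreover have "finite {i. i < k \<and> P i}" for P by simp
  ultimately show ?thesis by (meson card_mono le_max_iff_disj)
qed

lemma hd_filter_eq_nth:
  assumes "j < length xs" "Q (xs ! j)" "\<forall>i<j. \<not> Q (xs ! i)"
  shows "hd (filter Q xs) = xs ! j"
proof -
  have "filter Q (take j xs) = []"
    using assms(3) by (auto simp: filter_empty_conv in_set_conv_nth)
  then show ?thesis
    using assms(1,2) id_take_nth_drop[OF assms(1)]
    by (metis filter.simps(2) filter_append append_Nil list.sel(1))
qed

lemma last_filter_eq_nth:
  assumes "j < length xs" "Q (xs ! j)" "\<forall>i. j < i \<and> i < length xs \<longrightarrow> \<not> Q (xs ! i)"
  shows "last (filter Q xs) = xs ! j"
proof -
  have "filter Q (drop (Suc j) xs) = []"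
    using assms(3) by (auto simp: filter_empty_conv in_set_conv_nth)
  then show ?thesis
    using assms(1,2) id_take_nth_drop[OF assms(1)]
    by (metis filter.simps(2) filter_append last_snoc append_Cons append_Nil2 append_Nil)
qed

lemma nth_mem_iff_index_eq:
  "distinct xs \<Longrightarrow> i < length xs \<Longrightarrow> j < length xs \<Longrightarrow> set xs \<inter> X = {xs ! j} \<Longrightarrow>
    xs ! i \<in> X \<longleftrightarrow> i = j"
  by (metis Int_iff nth_mem singleton_iff nth_eq_iff_index_eq)

section \<open>Flows and the weak Menger inequality\<close>

definition net_outflow :: "('a,'b) pre_digraph \<Rightarrow> 'b set \<Rightarrow> 'a \<Rightarrow> int" where
  "net_outflow G A v = (\<Sum>a\<in>A. of_bool (tail G a = v) - of_bool (head G a = v))"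

lemma net_outflow_union:
  "finite A \<Longrightarrow> finite B \<Longrightarrow> A \<inter> B = {} \<Longrightarrow>
    net_outflow G (A \<union> B) v = net_outflow G A v + net_outflow G B v"
  unfolding net_outflow_def by (rule sum.union_disjoint)

lemma net_outflow_diff:
  "finite A \<Longrightarrow> B \<subseteq> A \<Longrightarrow> net_outflow G (A - B) v = net_outflow G A v - net_outflow G B v"
  unfolding net_outflow_def by (rule sum_diff)

lemma net_outflow_UN_disjoint:
  assumes "finite P" "\<forall>p\<in>P. \<forall>q\<in>P. p \<noteq> q \<longrightarrow> set p \<inter> set q = {}"
  shows "net_outflow G (\<Union>p\<in>P. set p) v = (\<Sum>p\<in>P. net_outflow G (set p) v)"
  unfolding net_outflow_def using assms by (intro sum.UNION_disjoint) auto

lemma net_outflow_cas: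
  assumes "pre_digraph.cas G u q w" "distinct q"
  shows "net_outflow G (set q) v = of_bool (v = u) - of_bool (v = w)"
proof -
  have "(\<Sum>a\<leftarrow>q. of_bool (tail G a = v) - of_bool (head G a = v)) =
        (of_bool (v = u) - of_bool (v = w) :: int)"
    using assms(1)
  proof (induction q arbitrary: u)
    case Nil
    then show ?case by (simp add: pre_digraph.cas.simps)
  next
    case (Cons a q)
    then have "tail G a = u" "pre_digraph.cas G (head G a) q w"
      by (simp_all add: pre_digraph.cas.simps)
    with Cons.IH show ?case by auto
  qed
  then show ?thesis
    using assms(2) by (simp add: net_outflow_def sum_list_distinct_conv_sum_set)
qed

lemma sum_net_outflow:
  assumes "finite A" "finite S"
  shows "(\<Sum>v\<in>S. net_outflow G A v) = int (card {a\<in>A. tail G a \<in> S \<and> head G a \<notin> S})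
          - int (card {a\<in>A. head G a \<in> S \<and> tail G a \<notin> S})"
proof -
  have delta: "(\<Sum>v\<in>S. of_bool (x = v)) = (of_bool (x \<in> S) :: int)" for x
    using assms(2) by (simp add: of_bool_def sum.delta')
  have "(\<Sum>v\<in>S. net_outflow G A v)
      = (\<Sum>a\<in>A. of_bool (tail G a \<in> S) - of_bool (head G a \<in> S))"
    unfolding net_outflow_def sum_subtractf sum.swap[where A = S] delta ..
  also have "\<dots> = (\<Sum>a\<in>A. of_bool (tail G a \<in> S \<and> head G a \<notin> S)
                        - of_bool (head G a \<in> S \<and> tail G a \<notin> S))"
    by (intro sum.cong) auto
  finally show ?thesis
    using assms(1) by (simp add: sum_subtractf Int_def conj_commute)
qed

definition st_flow :: "('a,'b) pre_digraph \<Rightarrow> 'a \<Rightarrow> 'a \<Rightarrow> 'b set \<Rightarrow> nat \<Rightarrow> bool" where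
  "st_flow G s t F m \<longleftrightarrow> F \<subseteq> arcs G \<and> (\<forall>v. v \<noteq> s \<and> v \<noteq> t \<longrightarrow> net_outflow G F v = 0)
     \<and> net_outflow G F s = int m"

lemma st_flow_across_cut:
  assumes "st_flow G s t F m" "finite F" "finite R" "s \<in> R" "t \<notin> R"
  shows "int (card {a\<in>F. tail G a \<in> R \<and> head G a \<notin> R})
           - int (card {a\<in>F. head G a \<in> R \<and> tail G a \<notin> R}) = int m"
proof -
  have "(\<Sum>v\<in>R. net_outflow G F v) = net_outflow G F s"
    using assms(1,5) unfolding st_flow_def sum.remove[OF assms(3,4)] by (auto intro: sum.neutral)
  then show ?thesis using sum_net_outflow[OF assms(2,3)] assms(1) by (simp add: st_flow_def)
qed

lemma cas_crossing_arc:
  "pre_digraph.cas G u p w \<Longrightarrow> u \<in> R \<Longrightarrow> w \<notin> R \<Longrightarrow>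
    \<exists>a\<in>set p. tail G a \<in> R \<and> head G a \<notin> R"
proof (induction p arbitrary: u)
  case Nil
  then show ?case by (simp add: pre_digraph.cas.simps)
next
  case (Cons a p)
  then have "tail G a = u" "pre_digraph.cas G (head G a) p w"
    by (simp_all add: pre_digraph.cas.simps)
  with Cons show ?case by (cases "head G a \<in> R") auto
qed

lemma edge_disjoint_paths_arcs:
  "edge_disjoint_paths G s t P \<Longrightarrow> (\<Union>p\<in>P. set p) \<subseteq> arcs G"
  by (auto simp: edge_disjoint_paths_def pre_digraph.apath_def pre_digraph.awalk_def)

context wf_digraph
begin

lemma net_outflow_edge_disjoint_paths:
  assumes "edge_disjoint_paths G s t P" "finite P"
  shows "net_outflow G (\<Union>p\<in>P. set p) v = int (card P) * (of_bool (v = s) - of_bool (v = t))"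
proof -
  have "net_outflow G (set p) v = of_bool (v = s) - of_bool (v = t)" if "p \<in> P" for p
    using that assms(1) distinct_verts_imp_distinct
    by (intro net_outflow_cas) (auto simp: edge_disjoint_paths_def apath_def awalk_def)
  then show ?thesis
    using assms by (simp add: net_outflow_UN_disjoint edge_disjoint_paths_def)
qed

lemma st_flow_edge_disjoint_paths:
  assumes "edge_disjoint_paths G s t P" "finite P" "s \<noteq> t"
  shows "st_flow G s t (\<Union>p\<in>P. set p) (card P)"
  using edge_disjoint_paths_arcs[OF assms(1)] assms
  by (auto simp: st_flow_def net_outflow_edge_disjoint_paths)

end

context fin_digraph
begin

lemma st_flow_finite: "st_flow G s t F m \<Longrightarrow> finite F"
  unfolding st_flow_def using finite_arcs finite_subset by blast

lemma st_flow_path: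
  assumes "s \<in> verts G" "s \<noteq> t" and flow: "st_flow G s t F (Suc m)"
  shows "\<exists>p. apath s p t \<and> set p \<subseteq> F"
proof -
  define R where "R = {v. \<exists>q. awalk s q v \<and> set q \<subseteq> F}"
  have "s \<in> R" unfolding R_def using assms(1) by (auto simp: awalk_Nil_iff intro!: exI[of _ "[]"])
  have "R \<subseteq> verts G" unfolding R_def using awalk_last_in_verts by blast
  then have "finite R" by (rule finite_subset) simp
  have "t \<in> R"
  proof (rule ccontr)
    assume "t \<notin> R"
    have "head G a \<in> R" if "a \<in> F" "tail G a \<in> R" for a
    proof -
      from that obtain q where q: "awalk s q (tail G a)" "set q \<subseteq> F" unfolding R_def by blast
      have "a \<in> arcs G" using that flow unfolding st_flow_def by blast
      then have "awalk s (q @ [a]) (head G a)" using q(1) by (auto simp: awalk_simps)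
      then show ?thesis
        unfolding R_def using q(2) that(1) by (intro CollectI exI[of _ "q @ [a]"]) auto
    qed
    then have no_exit: "{a\<in>F. tail G a \<in> R \<and> head G a \<notin> R} = {}" by blast
    show False
      using st_flow_across_cut[OF flow st_flow_finite[OF flow] \<open>finite R\<close> \<open>s \<in> R\<close> \<open>t \<notin> R\<close>]
      unfolding no_exit by simp
  qed
  then obtain q where "awalk s q t" "set q \<subseteq> F" unfolding R_def by blast
  then show ?thesis using apath_awalk_to_apath awalk_to_apath_subset by blast
qed

lemma st_flow_decomposition:
  assumes "s \<in> verts G" "s \<noteq> t"
  shows "st_flow G s t F m \<Longrightarrow>
    \<exists>Q. edge_disjoint_paths G s t Q \<and> finite Q \<and> card Q = m \<and> (\<forall>q\<in>Q. set q \<subseteq> F)"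
proof (induction m arbitrary: F)
  case 0
  then show ?case by (intro exI[of _ "{}"]) (simp add: edge_disjoint_paths_def)
next
  case (Suc m)
  obtain p where p: "apath s p t" "set p \<subseteq> F" using st_flow_path[OF assms Suc.prems] by blast
  then have cas: "cas s p t" and "distinct p"
    using distinct_verts_imp_distinct unfolding apath_def awalk_def by blast+
  then have "p \<noteq> []" using assms(2) by (cases p) auto
  have "st_flow G s t (F - set p) m"
    using Suc.prems assms(2)
    by (auto simp: st_flow_def net_outflow_diff[OF st_flow_finite[OF Suc.prems] p(2)]
        net_outflow_cas[OF cas \<open>distinct p\<close>])
  then obtain Q where Q: "edge_disjoint_paths G s t Q" "finite Q" "card Q = m"
      "\<forall>q\<in>Q. set q \<subseteq> F - set p"
    using Suc.IH by blast
  then have "p \<notin> Q" using \<open>p \<noteq> []\<close> by (cases p) auto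
  then show ?case
    using Q p by (intro exI[of _ "insert p Q"]) (auto simp: edge_disjoint_paths_def)
qed

end

definition residual :: "('a,'b) pre_digraph \<Rightarrow> 'b set \<Rightarrow> ('a, 'b \<times> bool) pre_digraph" where
  "residual G F = \<lparr>verts = verts G,
     arcs = (\<lambda>a. (a, True)) ` (arcs G - F) \<union> (\<lambda>a. (a, False)) ` F,
     tail = (\<lambda>(a, fwd). if fwd then tail G a else head G a),
     head = (\<lambda>(a, fwd). if fwd then head G a else tail G a)\<rparr>"

lemma residual_simps [simp]:
  "verts (residual G F) = verts G"
  "arcs (residual G F) = (\<lambda>a. (a, True)) ` (arcs G - F) \<union> (\<lambda>a. (a, False)) ` F"
  "tail (residual G F) (a, True) = tail G a" "head (residual G F) (a, True) = head G a"
  "tail (residual G F) (a, False) = head G a" "head (residual G F) (a, False) = tail G a"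
  by (simp_all add: residual_def)

lemma wf_digraph_residual: "wf_digraph G \<Longrightarrow> F \<subseteq> arcs G \<Longrightarrow> wf_digraph (residual G F)"
  unfolding wf_digraph_def by (auto simp: residual_def)

lemma net_outflow_residual:
  assumes "finite Q"
  shows "net_outflow (residual G F) Q v
           = net_outflow G {a. (a, True) \<in> Q} v - net_outflow G {a. (a, False) \<in> Q} v"
proof -
  define Fw where "Fw = {a. (a, True) \<in> Q}"
  define Bw where "Bw = {a. (a, False) \<in> Q}"
  have Q: "Q = (\<lambda>a. (a, True)) ` Fw \<union> (\<lambda>a. (a, False)) ` Bw"
  proof (intro equalityI subsetI)
    fix x assume "x \<in> Q"
    moreover obtain a b where "x = (a, b)" by fastforce
    ultimately show "x \<in> (\<lambda>a. (a, True)) ` Fw \<union> (\<lambda>a. (a, False)) ` Bw"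
      unfolding Fw_def Bw_def by (cases b) auto
  qed (auto simp: Fw_def Bw_def)
  have "finite {a. (a, b) \<in> Q}" for b
    using finite_vimageI[OF assms, of "\<lambda>a. (a, b)"] by (simp add: vimage_def inj_on_def)
  then have "finite Fw" "finite Bw" unfolding Fw_def Bw_def by blast+
  have "net_outflow (residual G F) Q v = net_outflow (residual G F) ((\<lambda>a. (a, True)) ` Fw) v
      + net_outflow (residual G F) ((\<lambda>a. (a, False)) ` Bw) v"
    unfolding Q by (rule net_outflow_union) (use \<open>finite Fw\<close> \<open>finite Bw\<close> in auto)
  also have "\<dots> = net_outflow G Fw v - net_outflow G Bw v"
    by (simp add: net_outflow_def sum.reindex inj_on_def sum_subtractf)
  finally show ?thesis unfolding Fw_def Bw_def .
qed

context fin_digraph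
begin

lemma augmenting_path:
  assumes "s \<in> verts G" "s \<noteq> t" and paths: "edge_disjoint_paths G s t P" "finite P"
    and aug: "pre_digraph.apath (residual G (\<Union>p\<in>P. set p)) s q t"
  shows "\<exists>Q. edge_disjoint_paths G s t Q \<and> finite Q \<and> card Q = Suc (card P)"
proof -
  define F where "F = (\<Union>p\<in>P. set p)"
  define H where "H = residual G F"
  have "F \<subseteq> arcs G" unfolding F_def using paths(1) by (rule edge_disjoint_paths_arcs)
  then have "finite F" using finite_arcs by (rule finite_subset)
  interpret H: wf_digraph H
    unfolding H_def using wf_digraph \<open>F \<subseteq> arcs G\<close> by (rule wf_digraph_residual)
  have "H.apath s q t" using aug unfolding H_def F_def .
  then have cas: "H.cas s q t" and "distinct q" and "set q \<subseteq> arcs H"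
    using H.distinct_verts_imp_distinct unfolding H.apath_def H.awalk_def by blast+
  txt \<open>Augment F along q: q uses the arcs of Fw forwards and those of Bw backwards.\<close>
  define Fw where "Fw = {a. (a, True) \<in> set q}"
  define Bw where "Bw = {a. (a, False) \<in> set q}"
  have "Fw \<subseteq> arcs G - F" "Bw \<subseteq> F"
    using \<open>set q \<subseteq> arcs H\<close> unfolding Fw_def Bw_def H_def by auto
  then have "finite Fw" "finite Bw"
    using finite_subset[OF _ finite_arcs] finite_subset[OF _ \<open>finite F\<close>] by blast+
  have q_flow: "net_outflow G Fw v - net_outflow G Bw v = of_bool (v = s) - of_bool (v = t)" for v
    using net_outflow_residual[of "set q" G F v] net_outflow_cas[OF cas \<open>distinct q\<close>]
    unfolding H_def Fw_def Bw_def by simp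
  have "net_outflow G ((F - Bw) \<union> Fw) v
          = int (Suc (card P)) * (of_bool (v = s) - of_bool (v = t))" for v
  proof -
    have "net_outflow G ((F - Bw) \<union> Fw) v = net_outflow G (F - Bw) v + net_outflow G Fw v"
      by (rule net_outflow_union) (use \<open>finite F\<close> \<open>finite Fw\<close> \<open>Fw \<subseteq> arcs G - F\<close> in auto)
    also have "\<dots> = net_outflow G F v + (net_outflow G Fw v - net_outflow G Bw v)"
      using net_outflow_diff[OF \<open>finite F\<close> \<open>Bw \<subseteq> F\<close>] by simp
    also have "\<dots> = int (Suc (card P)) * (of_bool (v = s) - of_bool (v = t))"
      unfolding q_flow F_def net_outflow_edge_disjoint_paths[OF paths] by (simp add: algebra_simps)
    finally show ?thesis .
  qed
  then have "st_flow G s t ((F - Bw) \<union> Fw) (Suc (card P))"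
    using \<open>F \<subseteq> arcs G\<close> \<open>Fw \<subseteq> arcs G - F\<close> \<open>s \<noteq> t\<close> by (auto simp: st_flow_def)
  then show ?thesis using st_flow_decomposition[OF assms(1,2)] by blast
qed

lemma unreachable_residual_cut:
  assumes "s \<in> verts G" and paths: "edge_disjoint_paths G s t P" "finite P"
    and unreachable: "\<not> s \<rightarrow>\<^sup>*\<^bsub>residual G (\<Union>p\<in>P. set p)\<^esub> t"
  shows "\<exists>Z. st_cut G s t Z \<and> card Z = card P"
proof -
  define F where "F = (\<Union>p\<in>P. set p)"
  define H where "H = residual G F"
  have "F \<subseteq> arcs G" unfolding F_def using paths(1) by (rule edge_disjoint_paths_arcs)
  then have "finite F" using finite_arcs by (rule finite_subset)
  interpret H: wf_digraph H
    unfolding H_def using wf_digraph \<open>F \<subseteq> arcs G\<close> by (rule wf_digraph_residual)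
  define R where "R = {v. s \<rightarrow>\<^sup>*\<^bsub>H\<^esub> v}"
  have "s \<in> R" using assms(1) H.reachable_refl by (simp add: R_def H_def)
  have "t \<notin> R" using unreachable by (simp add: R_def H_def F_def)
  have "R \<subseteq> verts G" using H.reachable_in_verts(2) by (auto simp: R_def H_def)
  then have "finite R" using finite_verts by (rule finite_subset)
  have closed: "head H x \<in> R" if "x \<in> arcs H" "tail H x \<in> R" for x
    using that H.reachable_adj_trans[OF _ H.in_arcs_imp_in_arcs_ends] unfolding R_def by blast
  have forward: "a \<in> F" if "a \<in> arcs G" "tail G a \<in> R" "head G a \<notin> R" for a
    using that closed[of "(a, True)"] by (auto simp: H_def)
  have backward: "tail G a \<in> R" if "a \<in> F" "head G a \<in> R" for a
    using that closed[of "(a, False)"] by (auto simp: H_def)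
  define Z where "Z = {a\<in>F. tail G a \<in> R \<and> head G a \<notin> R}"
  have "st_cut G s t Z"
    unfolding st_cut_def
  proof (intro conjI allI impI)
    show "Z \<subseteq> arcs G" using \<open>F \<subseteq> arcs G\<close> by (auto simp: Z_def)
    fix p assume "apath s p t"
    then have "cas s p t" "set p \<subseteq> arcs G" by (auto simp: apath_def awalk_def)
    then obtain a where "a \<in> set p" "tail G a \<in> R" "head G a \<notin> R"
      using cas_crossing_arc \<open>s \<in> R\<close> \<open>t \<notin> R\<close> by metis
    then show "set p \<inter> Z \<noteq> {}"
      using forward \<open>set p \<subseteq> arcs G\<close> by (auto simp: Z_def)
  qed
  moreover have "card Z = card P"
  proof -
    have "s \<noteq> t" using \<open>s \<in> R\<close> \<open>t \<notin> R\<close> by blast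
    then have flow: "st_flow G s t F (card P)"
      unfolding F_def using paths by (intro st_flow_edge_disjoint_paths)
    have no_entry: "{a\<in>F. head G a \<in> R \<and> tail G a \<notin> R} = {}" using backward by blast
    show ?thesis
      using st_flow_across_cut[OF flow \<open>finite F\<close> \<open>finite R\<close> \<open>s \<in> R\<close> \<open>t \<notin> R\<close>]
      unfolding no_entry Z_def by simp
  qed
  ultimately show ?thesis by blast
qed

lemma exists_cut_card_le_max_path_family:
  assumes "s \<in> verts G" "s \<noteq> t" "max_path_family G s t P"
  shows "\<exists>Z. st_cut G s t Z \<and> card Z \<le> card P"
proof -
  have paths: "edge_disjoint_paths G s t P" "finite P"
    using assms(3) by (auto simp: max_path_family_def)
  show ?thesis
  proof (cases "s \<rightarrow>\<^sup>*\<^bsub>residual G (\<Union>p\<in>P. set p)\<^esub> t")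
    case True
    interpret H: wf_digraph "residual G (\<Union>p\<in>P. set p)"
      using wf_digraph edge_disjoint_paths_arcs[OF paths(1)] by (rule wf_digraph_residual)
    from True obtain q where "H.apath s q t"
      using H.apath_awalk_to_apath H.reachable_awalk by blast
    then have False
      using augmenting_path[OF assms(1,2) paths] assms(3) by (fastforce simp: max_path_family_def)
    then show ?thesis ..
  next
    case False
    then show ?thesis using unreachable_residual_cut[OF assms(1) paths] by force
  qed
qed

end

section \<open>Minimum cuts along a maximum path family\<close>

lemma (in wf_digraph) st_cut_neq: "st_cut G s t X \<Longrightarrow> s \<in> verts G \<Longrightarrow> s \<noteq> t"
  using apath_Nil_iff[of s s] by (auto simp: st_cut_def)

context fin_digraph
begin

lemma min_cut_on_max_path_family:
  assumes "s \<in> verts G" "s \<noteq> t" and P: "max_path_family G s t P" and X: "X \<in> min_cuts G s t"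
  shows "X \<subseteq> (\<Union>p\<in>P. set p)" and "\<forall>p\<in>P. \<exists>x. set p \<inter> X = {x}"
proof -
  have paths: "edge_disjoint_paths G s t P" "finite P" using P by (auto simp: max_path_family_def)
  have "st_cut G s t X" using X by (simp add: min_cuts_def)
  then have "X \<subseteq> arcs G" by (simp add: st_cut_def)
  then have "finite X" using finite_arcs by (rule finite_subset)
  have meets: "1 \<le> card (set p \<inter> X)" if "p \<in> P" for p
    using that paths(1) \<open>st_cut G s t X\<close> \<open>finite X\<close>
    by (auto simp: edge_disjoint_paths_def st_cut_def Suc_le_eq card_gt_0_iff)
  obtain Z where "st_cut G s t Z" "card Z \<le> card P"
    using exists_cut_card_le_max_path_family[OF assms(1-3)] by blast
  then have "card X \<le> card P" using X by (force simp: min_cuts_def)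
  have card_UN: "card (\<Union>p\<in>P. set p \<inter> X) = (\<Sum>p\<in>P. card (set p \<inter> X))"
    using paths by (intro card_UN_disjoint) (auto simp: edge_disjoint_paths_def)
  have "card P \<le> (\<Sum>p\<in>P. card (set p \<inter> X))"
    using sum_mono[OF meets] by simp
  moreover have "(\<Sum>p\<in>P. card (set p \<inter> X)) \<le> card X"
    unfolding card_UN[symmetric] using \<open>finite X\<close> by (intro card_mono) auto
  ultimately have tight: "card P = card X" "(\<Sum>p\<in>P. card (set p \<inter> X)) = card P"
    using \<open>card X \<le> card P\<close> by linarith+
  have "(\<Union>p\<in>P. set p \<inter> X) = X"
    using \<open>finite X\<close> card_UN tight by (intro card_subset_eq) auto
  then show "X \<subseteq> (\<Union>p\<in>P. set p)" by blast
  have "(\<Sum>p\<in>P. card (set p \<inter> X) - 1) = 0"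
    using tight meets by (simp add: sum_subtractf_nat)
  then have "card (set p \<inter> X) = 1" if "p \<in> P" for p
    using that meets[OF that] paths(2) by (auto simp: sum_eq_0_iff intro: le_antisym)
  then show "\<forall>p\<in>P. \<exists>x. set p \<inter> X = {x}" by (simp add: card_1_singleton_iff)
qed

lemma U_lr_positions_on_path:
  assumes "s \<in> verts G" "s \<noteq> t" and P: "max_path_family G s t P"
    and C: "C \<in> U_lr G s t k" and "p \<in> P"
  shows "\<exists>a. (\<forall>i<k. a i < length p \<and> set p \<inter> C ! i = {p ! a i}) \<and> mono_on {..<k} a"
proof -
  have "apath s p t" using P \<open>p \<in> P\<close> by (auto simp: max_path_family_def edge_disjoint_paths_def)
  then have "distinct p" using distinct_verts_imp_distinct by (auto simp: apath_def)
  have "\<exists>j. j < length p \<and> set p \<inter> C ! i = {p ! j}" if "i < k" for i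
  proof -
    have "C ! i \<in> min_cuts G s t" using C \<open>i < k\<close> by (simp add: U_lr_def)
    then obtain x where "set p \<inter> C ! i = {x}"
      using min_cut_on_max_path_family(2)[OF assms(1-3)] \<open>p \<in> P\<close> by blast
    then show ?thesis by (metis Int_iff in_set_conv_nth insertI1)
  qed
  then obtain a where a: "\<forall>i<k. a i < length p \<and> set p \<inter> C ! i = {p ! a i}" by metis
  have "a i \<le> a j" if "i < j" "j < k" for i j
  proof -
    have "cut_le G s t (C ! i) (C ! j)" using C that by (simp add: U_lr_def)
    then obtain n where n: "n < length p" "p ! n \<in> C ! i" "\<forall>m<n. p ! m \<notin> C ! j"
      using \<open>apath s p t\<close> unfolding cut_le_def by blast
    then have "p ! n = p ! a i" using a that by (metis IntI nth_mem less_trans singletonD)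
    then have "n = a i" using n(1) a that \<open>distinct p\<close> by (simp add: nth_eq_iff_index_eq)
    then show ?thesis using n(3) a that by (metis Int_iff insertI1 not_le)
  qed
  then have "mono_on {..<k} a" by (intro mono_onI) (auto simp: le_less)
  with a show ?thesis by blast
qed

end

section \<open>Join and meet along a path\<close>

lemma mem_S_max_iff:
  assumes "\<forall>p\<in>P. \<forall>q\<in>P. p \<noteq> q \<longrightarrow> set p \<inter> set q = {}" "\<forall>q\<in>P. set q \<inter> Z \<noteq> {}"
    and "p \<in> P" "x \<in> set p"
  shows "x \<in> S_max P Z \<longleftrightarrow> x = last (filter (\<lambda>e. e \<in> Z) p)"
proof
  assume "x \<in> S_max P Z"
  then obtain q where q: "q \<in> P" "x = last (filter (\<lambda>e. e \<in> Z) q)" by (auto simp: S_max_def)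
  then have "filter (\<lambda>e. e \<in> Z) q \<noteq> []" using assms(2) by (auto simp: filter_empty_conv)
  then have "x \<in> set q" using q(2) last_in_set by fastforce
  then have "q = p" using assms(1,3,4) q(1) by blast
  then show "x = last (filter (\<lambda>e. e \<in> Z) p)" using q(2) by simp
qed (use assms(3) in \<open>auto simp: S_max_def\<close>)

lemma mem_S_min_iff:
  assumes "\<forall>p\<in>P. \<forall>q\<in>P. p \<noteq> q \<longrightarrow> set p \<inter> set q = {}" "\<forall>q\<in>P. set q \<inter> Z \<noteq> {}"
    and "p \<in> P" "x \<in> set p"
  shows "x \<in> S_min P Z \<longleftrightarrow> x = hd (filter (\<lambda>e. e \<in> Z) p)"
proof
  assume "x \<in> S_min P Z"
  then obtain q where q: "q \<in> P" "x = hd (filter (\<lambda>e. e \<in> Z) q)" by (auto simp: S_min_def)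
  then have "filter (\<lambda>e. e \<in> Z) q \<noteq> []" using assms(2) by (auto simp: filter_empty_conv)
  then have "x \<in> set q" using q(2) hd_in_set by fastforce
  then have "q = p" using assms(1,3,4) q(1) by blast
  then show "x = hd (filter (\<lambda>e. e \<in> Z) p)" using q(2) by simp
qed (use assms(3) in \<open>auto simp: S_min_def\<close>)

lemma nth_mem_S_max_Un_iff:
  assumes disjoint: "\<forall>p\<in>P. \<forall>q\<in>P. p \<noteq> q \<longrightarrow> set p \<inter> set q = {}"
    and meets: "\<forall>q\<in>P. set q \<inter> (X \<union> Y) \<noteq> {}" and "p \<in> P" "distinct p"
    and "a < length p" "set p \<inter> X = {p ! a}" "b < length p" "set p \<inter> Y = {p ! b}"
    and "c < length p"
  shows "p ! c \<in> S_max P (X \<union> Y) \<longleftrightarrow> c = max a b"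
proof -
  have "p ! i \<in> X \<union> Y \<longleftrightarrow> i = a \<or> i = b" if "i < length p" for i
    using that assms(4-8) nth_mem_iff_index_eq by blast
  then have "last (filter (\<lambda>e. e \<in> X \<union> Y) p) = p ! max a b"
    using assms(5,7) by (intro last_filter_eq_nth) auto
  then show ?thesis
    using mem_S_max_iff[OF disjoint meets \<open>p \<in> P\<close> nth_mem[OF \<open>c < length p\<close>]] assms(4,5,7,9)
    by (simp add: nth_eq_iff_index_eq)
qed

lemma nth_mem_S_min_Un_iff:
  assumes disjoint: "\<forall>p\<in>P. \<forall>q\<in>P. p \<noteq> q \<longrightarrow> set p \<inter> set q = {}"
    and meets: "\<forall>q\<in>P. set q \<inter> (X \<union> Y) \<noteq> {}" and "p \<in> P" "distinct p"
    and "a < length p" "set p \<inter> X = {p ! a}" "b < length p" "set p \<inter> Y = {p ! b}"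
    and "c < length p"
  shows "p ! c \<in> S_min P (X \<union> Y) \<longleftrightarrow> c = min a b"
proof -
  have "p ! i \<in> X \<union> Y \<longleftrightarrow> i = a \<or> i = b" if "i < length p" for i
    using that assms(4-8) nth_mem_iff_index_eq by blast
  then have "hd (filter (\<lambda>e. e \<in> X \<union> Y) p) = p ! min a b"
    using assms(5,7) by (intro hd_filter_eq_nth) auto
  then show ?thesis
    using mem_S_min_iff[OF disjoint meets \<open>p \<in> P\<close> nth_mem[OF \<open>c < length p\<close>]] assms(4,5,7,9)
    by (simp add: nth_eq_iff_index_eq)
qed

lemma mu_nth_eq_card:
  assumes "distinct p" "c < length p" "\<forall>i<length C. a i < length p \<and> set p \<inter> C ! i = {p ! a i}"
  shows "mu (p ! c) C = card {i. i < length C \<and> a i = c}"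
proof -
  have "p ! c \<in> C ! i \<longleftrightarrow> a i = c" if "i < length C" for i
    using assms that nth_mem_iff_index_eq by metis
  then show ?thesis unfolding mu_def by (metis (lifting))
qed

lemma mu_tup_join:
  "length C = length D \<Longrightarrow>
    mu e (tup_join P C D) = card {i. i < length C \<and> e \<in> S_max P (C ! i \<union> D ! i)}"
  unfolding mu_def tup_join_def by (intro arg_cong[where f = card]) auto

lemma mu_tup_meet:
  "length C = length D \<Longrightarrow>
    mu e (tup_meet P C D) = card {i. i < length C \<and> e \<in> S_min P (C ! i \<union> D ! i)}"
  unfolding mu_def tup_meet_def by (intro arg_cong[where f = card]) auto

theorem lemma4:
  fixes G :: "('a,'b) pre_digraph" and s t :: 'a and k :: nat
    and P :: "'b list set" and C1 C2 :: "'b set list" and e :: 'b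
  assumes "fin_digraph G" and "s \<in> verts G" and "t \<in> verts G" and "k \<ge> 1"
    and "max_path_family G s t P"
    and "C1 \<in> U_lr G s t k" and "C2 \<in> U_lr G s t k"
    and "e \<in> tup_edges C1 \<union> tup_edges C2"
  shows "max (mu e (tup_join P C1 C2)) (mu e (tup_meet P C1 C2))
           \<le> max (mu e C1) (mu e C2)"
proof -
  interpret fin_digraph G by fact
  have len: "length C1 = k" "length C2 = k"
    and cuts: "\<forall>i<k. C1 ! i \<in> min_cuts G s t \<and> C2 ! i \<in> min_cuts G s t"
    using assms(6,7) by (auto simp: U_lr_def)
  obtain X where "X \<in> min_cuts G s t" "e \<in> X"
    using assms(8) cuts len by (auto simp: tup_edges_def in_set_conv_nth) blast+
  moreover have "s \<noteq> t" using calculation(1) assms(2) unfolding min_cuts_def by (blast dest: st_cut_neq)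
  ultimately obtain p c where p: "p \<in> P" "c < length p" "e = p ! c"
    using min_cut_on_max_path_family(1)[OF assms(2) _ assms(5)] by (force simp: in_set_conv_nth)
  obtain a b where a: "\<forall>i<k. a i < length p \<and> set p \<inter> C1 ! i = {p ! a i}" "mono_on {..<k} a"
    and b: "\<forall>i<k. b i < length p \<and> set p \<inter> C2 ! i = {p ! b i}" "mono_on {..<k} b"
    using U_lr_positions_on_path[OF assms(2) \<open>s \<noteq> t\<close> assms(5) _ p(1)] assms(6,7) by metis
  have paths: "\<forall>q\<in>P. apath s q t" "\<forall>q\<in>P. \<forall>q'\<in>P. q \<noteq> q' \<longrightarrow> set q \<inter> set q' = {}"
    using assms(5) by (auto simp: max_path_family_def edge_disjoint_paths_def)
  then have "distinct p" using p(1) distinct_verts_imp_distinct by (auto simp: apath_def)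
  have meets: "\<forall>q\<in>P. set q \<inter> (C1 ! i \<union> C2 ! i) \<noteq> {}" if "i < k" for i
  proof -
    have "st_cut G s t (C1 ! i)" using cuts that by (simp add: min_cuts_def)
    then show ?thesis using paths(1) unfolding st_cut_def by blast
  qed
  have "e \<in> S_max P (C1 ! i \<union> C2 ! i) \<longleftrightarrow> max (a i) (b i) = c"
    "e \<in> S_min P (C1 ! i \<union> C2 ! i) \<longleftrightarrow> min (a i) (b i) = c" if "i < k" for i
    using nth_mem_S_max_Un_iff[OF paths(2) meets[OF that] p(1) \<open>distinct p\<close>, of "a i" "b i" c]
      nth_mem_S_min_Un_iff[OF paths(2) meets[OF that] p(1) \<open>distinct p\<close>, of "a i" "b i" c]
      a(1) b(1) that p by auto
  then have "mu e (tup_join P C1 C2) = card {i. i < k \<and> max (a i) (b i) = c}"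
    "mu e (tup_meet P C1 C2) = card {i. i < k \<and> min (a i) (b i) = c}"
    by (simp_all add: mu_tup_join mu_tup_meet len cong: conj_cong)
  moreover have "mu e C1 = card {i. i < k \<and> a i = c}" "mu e C2 = card {i. i < k \<and> b i = c}"
    using mu_nth_eq_card[OF \<open>distinct p\<close> p(2), of C1 a] mu_nth_eq_card[OF \<open>distinct p\<close> p(2), of C2 b]
      a(1) b(1) len p(3) by simp_all
  ultimately show ?thesis
    using card_max_eq_le_max_card[OF a(2) b(2)] card_min_eq_le_max_card[OF a(2) b(2)] by simp
qed

end
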